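(* (a) If $\Lambda$ is a boundary lamination, then no point $p\in S^1$ is contained in more than two leaves of $\Lambda$. (b) Conversely, suppose $\Lambda$ is a lamination such that no point $p\in S^1$ is contained in more than two leaves of $\Lambda$, and $\Lambda$ has no isolated leaves. Let $\mathcal{L}:=\mathrm{Rel}(\Lambda)$. Then $\mathrm{Lam}(\mathcal{L})=\Lambda$; in particular $\Lambda$ is a boundary lamination.
   Context: A lamination is a closed subset of the space of unordered pairs of distinct points of $S^1$ such that no two elements (leaves) are linked in $S^1$. Leaves are also viewed as geodesics in $\mathbb{H}^2$ with $S^1=\partial\mathbb{H}^2$; a leaf is isolated if it is not a limit of other leaves on either side. A laminar relation is an equivalence relation on $S^1$ with closed classes, closed in the space of unordered distinct pairs, with distinct classes unlinked. For a laminar relation $\mathcal{L}$, $\mathrm{Lam}(\mathcal{L})$ is the lamination consisting, for each nontrivial class $\nu$, of the pair $\nu$ if $|\nu|=2$ and of the endpoint pairs of the sides of the hyperbolic convex hull of $\nu$ if $|\nu|>2$; a lamination of this form is a boundary lamination. For a lamination $\Lambda$, $\mathrm{Rel}(\Lambda)$ is the smallest closed equivalence relation (as a set of unordered pairs) containing $\Lambda$ and containing every unordered pair that crosses only countably many leaves of $\Lambda$. *)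

theory Defs
  imports "HOL-Analysis.Analysis"
begin

text \<open>The circle S^1 is the unit circle in the complex plane (boundary of the
Klein/Poincare disk model of the hyperbolic plane).  An unordered pair {a,b} of
distinct points is encoded by the two ordered pairs (a,b), (b,a); sets of
unordered pairs are encoded as symmetric sets of ordered off-diagonal pairs.
The topology of the space of unordered distinct pairs is the quotient of the
off-diagonal subspace of S^1 x S^1, so a symmetric set is closed there iff it is
closed in the off-diagonal subspace.\<close>

definition S1 :: "complex set" where
  "S1 = sphere 0 1"

definition offdiag :: "(complex \<times> complex) set" where
  "offdiag = {(a, b). a \<in> S1 \<and> b \<in> S1 \<and> a \<noteq> b}"

definition linked :: "complex \<Rightarrow> complex \<Rightarrow> complex \<Rightarrow> complex \<Rightarrow> bool" where
  "linked a b c d \<longleftrightarrow> a \<in> S1 \<and> b \<in> S1 \<and> c \<in> S1 \<and> d \<in> S1 \<and> a \<noteq> b \<and> c \<noteq> d \<and>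
     {a, b} \<inter> {c, d} = {} \<and> \<not> connected_component (S1 - {a, b}) c d"

definition lamination :: "(complex \<times> complex) set \<Rightarrow> bool" where
  "lamination \<Lambda> \<longleftrightarrow> \<Lambda> \<subseteq> offdiag \<and> sym \<Lambda> \<and> closedin (top_of_set offdiag) \<Lambda> \<and>
     (\<forall>(a, b) \<in> \<Lambda>. \<forall>(c, d) \<in> \<Lambda>. \<not> linked a b c d)"

definition isolated_leaf :: "(complex \<times> complex) set \<Rightarrow> complex \<times> complex \<Rightarrow> bool" where
  "isolated_leaf \<Lambda> l \<longleftrightarrow> l \<in> \<Lambda> \<and> \<not> (l islimpt \<Lambda>)"

definition laminar_relation :: "(complex \<times> complex) set \<Rightarrow> bool" where
  "laminar_relation R \<longleftrightarrow> equiv S1 R \<and> (\<forall>x \<in> S1. closed (R `` {x})) \<and>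
     closedin (top_of_set offdiag) (R \<inter> offdiag) \<and>
     (\<forall>x \<in> S1. \<forall>y \<in> S1. (x, y) \<notin> R \<longrightarrow>
        (\<forall>a \<in> R `` {x}. \<forall>b \<in> R `` {x}. \<forall>c \<in> R `` {y}. \<forall>d \<in> R `` {y}. \<not> linked a b c d))"

text \<open>The hyperbolic convex hull of a class is taken in the Klein model,
where geodesics are Euclidean chords, so the hyperbolic convex hull is the
Euclidean convex hull and its sides are the chords [a,b] (a, b in the class)
lying in the frontier of the hull.\<close>
definition Lam :: "(complex \<times> complex) set \<Rightarrow> (complex \<times> complex) set" where
  "Lam R = {(a, b). \<exists>x \<in> S1. let \<nu> = R `` {x} in
      (finite \<nu> \<and> card \<nu> = 2 \<and> {a, b} = \<nu> \<and> a \<noteq> b) \<or>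
      ((infinite \<nu> \<or> card \<nu> > 2) \<and> a \<in> \<nu> \<and> b \<in> \<nu> \<and> a \<noteq> b \<and>
        closed_segment a b \<subseteq> frontier (convex hull \<nu>))}"

definition boundary_lamination :: "(complex \<times> complex) set \<Rightarrow> bool" where
  "boundary_lamination \<Lambda> \<longleftrightarrow> (\<exists>R. laminar_relation R \<and> \<Lambda> = Lam R)"

text \<open>Rel(Lambda): smallest closed equivalence relation on S^1 containing Lambda and
all pairs of distinct points crossing only countably many leaves.  (Closedness
in S^1 x S^1 of an equivalence relation is equivalent to closedness of its set of
distinct unordered pairs in the space of unordered distinct pairs.)\<close>
definition Rel :: "(complex \<times> complex) set \<Rightarrow> (complex \<times> complex) set" where
  "Rel \<Lambda> = \<Inter>{R. equiv S1 R \<and> closed R \<and> \<Lambda> \<subseteq> R \<and>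
      {(a, b). (a, b) \<in> offdiag \<and> countable {(c, d) \<in> \<Lambda>. linked a b c d}} \<subseteq> R}"

definition at_most_two_leaves :: "(complex \<times> complex) set \<Rightarrow> bool" where
  "at_most_two_leaves \<Lambda> \<longleftrightarrow> (\<forall>p \<in> S1. finite {q. (p, q) \<in> \<Lambda>} \<and> card {q. (p, q) \<in> \<Lambda>} \<le> 2)"

end

(*
  (a) For an equivalence relation on the circle, a chord p q lies in Lam R exactly when p and q
  are equivalent and no chord between two points of their class crosses p q: a side of a convex
  hull of points on the circle is crossed by no chord of the hull, and a chord crossed by none
  has the whole class on one side, hence lies in the frontier. Among three chords p q1, p q2,
  p q3 one always separates the endpoints of the other two, so at most two leaves end at p.

  (b) Relate a and b when no leaf crosses the chord a b. A leaf through b crossing a c is a limit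
  of other leaves, and only finitely many leaves end at b, so a nearby leaf crosses a c while
  avoiding b and then crosses a b or b c; this makes the relation transitive. It is closed,
  contains the leaves, and by the Baire category theorem (the lamination has no isolated leaves)
  it contains every chord crossed by only countably many leaves, so it is Rel of the lamination.
  Two crossing chords within two classes would merge the classes, so the relation is laminar.
  Every leaf is uncrossed by chords of its class. Conversely, if a b is uncrossed but not a
  leaf, a compactness argument produces points related to a on the arc from a to b and points
  related to b on the arc from b to a; the chord joining them crosses a b, so a b is not in Lam.
*)

theory Submission
  imports Defs
begin

section \<open>Angles on the circle\<close>

lemma in_S1_iff: "z \<in> S1 \<longleftrightarrow> cmod z = 1"
  by (simp add: S1_def)

lemma cis_in_S1 [simp]: "cis t \<in> S1"
  by (simp add: in_S1_iff)

lemma closed_S1: "closed S1"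
  by (simp add: S1_def)

lemma S1_nonzero: "z \<in> S1 \<Longrightarrow> z \<noteq> 0"
  by (auto simp: in_S1_iff)

lemma divide_in_S1_iff: "q \<in> S1 \<Longrightarrow> z / q \<in> S1 \<longleftrightarrow> z \<in> S1"
  by (simp add: in_S1_iff norm_divide)

lemma cis_Arg2pi: "z \<in> S1 \<Longrightarrow> cis (Arg2pi z) = z"
  using Arg2pi_eq[of z] by (simp add: in_S1_iff cis_conv_exp)

lemma Arg2pi_cis: "0 \<le> t \<Longrightarrow> t < 2*pi \<Longrightarrow> Arg2pi (cis t) = t"
  using Arg2pi_unique[of 1 t "cis t"] by (simp add: cis_conv_exp)

lemma Arg2pi_inj_S1: "a \<in> S1 \<Longrightarrow> b \<in> S1 \<Longrightarrow> Arg2pi a = Arg2pi b \<Longrightarrow> a = b"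
  by (metis cis_Arg2pi)

lemma Arg2pi_divide_cases:
  assumes "w \<noteq> 0" "z \<noteq> 0"
  shows "Arg2pi (z / w) =
    (if Arg2pi w \<le> Arg2pi z then Arg2pi z - Arg2pi w else Arg2pi z - Arg2pi w + 2*pi)"
  using Arg2pi_diff[OF assms(2,1)] by auto

lemma Arg2pi_divide_self: "a \<in> S1 \<Longrightarrow> Arg2pi (a / a) = 0"
  using S1_nonzero Arg2pi_eq_0[of 1] by simp

lemma Arg2pi_divide_pos:
  assumes "a \<in> S1" "b \<in> S1" "a \<noteq> b"
  shows "0 < Arg2pi (b / a)"
proof -
  have "a / a \<in> S1" "b / a \<in> S1"
    using divide_in_S1_iff[OF assms(1)] assms(1,2) by blast+
  then have "Arg2pi (b / a) \<noteq> 0"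
    using assms Arg2pi_inj_S1[of "b / a" "a / a"] Arg2pi_divide_self[OF assms(1)] S1_nonzero[OF assms(1)]
    by auto
  then show ?thesis
    using Arg2pi_ge_0[of "b / a"] by linarith
qed

lemma mult_cis_in_S1: "a \<in> S1 \<Longrightarrow> a * cis t \<in> S1"
  by (simp add: in_S1_iff norm_mult)

lemma Arg2pi_mult_cis_divide: "a \<in> S1 \<Longrightarrow> 0 \<le> t \<Longrightarrow> t < 2*pi \<Longrightarrow> Arg2pi (a * cis t / a) = t"
  using S1_nonzero by (simp add: Arg2pi_cis)

lemma mult_cis_Arg2pi_divide: "a \<in> S1 \<Longrightarrow> z \<in> S1 \<Longrightarrow> a * cis (Arg2pi (z / a)) = z"
  using S1_nonzero by (simp add: cis_Arg2pi divide_in_S1_iff)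

definition strictly_between :: "real \<Rightarrow> real \<Rightarrow> real \<Rightarrow> bool" where
  "strictly_between x y z \<longleftrightarrow> (x < z \<and> z < y) \<or> (y < z \<and> z < x)"

text \<open>Cutting the circle at angle 0, two chords are linked iff their endpoint angles interleave.\<close>
definition interleaved :: "real \<Rightarrow> real \<Rightarrow> real \<Rightarrow> real \<Rightarrow> bool" where
  "interleaved x y z w \<longleftrightarrow> x \<noteq> y \<and> z \<noteq> x \<and> z \<noteq> y \<and> w \<noteq> x \<and> w \<noteq> y \<and>
     strictly_between x y z \<noteq> strictly_between x y w"

lemma interleaved_commute: "interleaved x y z w \<Longrightarrow> interleaved z w x y"
  unfolding interleaved_def strictly_between_def by (smt (verit))

lemma interleaved_swap: "interleaved y x z w = interleaved x y z w" "interleaved x y w z = interleaved x y z w"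
  unfolding interleaved_def strictly_between_def by auto

lemma interleaved_triangle:
  "interleaved a c x y \<Longrightarrow> a \<noteq> b \<Longrightarrow> b \<noteq> c \<Longrightarrow> x \<noteq> b \<Longrightarrow> y \<noteq> b \<Longrightarrow>
    interleaved a b x y \<or> interleaved b c x y"
  unfolding interleaved_def strictly_between_def by (smt (verit))

lemma interleaved_diagonal:
  "interleaved a b c d \<Longrightarrow> interleaved a c u v \<Longrightarrow> interleaved a b u v \<or> interleaved c d u v"
  unfolding interleaved_def strictly_between_def by (smt (verit))

lemma interleaved_three_chords:
  "distinct [p, q1, q2, q3] \<Longrightarrow>
    interleaved p q1 q2 q3 \<or> interleaved p q2 q1 q3 \<or> interleaved p q3 q1 q2"
  unfolding interleaved_def strictly_between_def by (simp, smt (verit))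

section \<open>Linked chords\<close>

text \<open>Twice the signed area of the triangle \<open>a b z\<close>: its sign tells on which side of the
  line \<open>a b\<close> the point \<open>z\<close> lies.\<close>
definition side :: "complex \<Rightarrow> complex \<Rightarrow> complex \<Rightarrow> real" where
  "side a b z = Im (cnj (b - a) * (z - a))"

lemma side_cis:
  "side (cis \<alpha>) (cis \<beta>) (cis t) = 4 * sin ((t - \<beta>)/2) * sin ((\<beta> - \<alpha>)/2) * sin ((t - \<alpha>)/2)"
proof -
  define x y where "x = (t - \<beta>)/2" and "y = (\<beta> - \<alpha>)/2"
  have h: "t - \<beta> = 2*x" "\<beta> - \<alpha> = 2*y" "t - \<alpha> = 2*x + 2*y" "(t - \<alpha>)/2 = x + y"
    by (simp_all add: x_def y_def field_simps)
  have c: "cos (2*x) = 1 - 2 * (sin x)^2" "cos (2*y) = 1 - 2 * (sin y)^2"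
    by (simp_all add: cos_double_sin)
  have "side (cis \<alpha>) (cis \<beta>) (cis t) = sin (t - \<beta>) + sin (\<beta> - \<alpha>) - sin (t - \<alpha>)"
    by (simp add: side_def sin_diff algebra_simps)
  also have "\<dots> = sin (2*x) + sin (2*y) - sin (2*x + 2*y)"
    by (simp only: h)
  also have "sin (2*x + 2*y) = (2 * sin x * cos x) * (1 - 2 * (sin y)^2) + (1 - 2 * (sin x)^2) * (2 * sin y * cos y)"
    unfolding sin_add c sin_double by (simp add: algebra_simps)
  finally have "side (cis \<alpha>) (cis \<beta>) (cis t) = 4 * sin x * sin y * sin (x + y)"
    unfolding sin_double by (simp add: sin_add algebra_simps power2_eq_square)
  then show ?thesis
    unfolding h(4) x_def y_def .
qed

lemma sin_half_pos_iff:
  assumes "\<bar>u\<bar> < 2*pi"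
  shows "0 < sin (u/2) \<longleftrightarrow> 0 < u" and "sin (u/2) < 0 \<longleftrightarrow> u < 0"
proof -
  have pos: "0 < sin (v/2)" if "0 < v" "v < 2*pi" for v
    using that by (intro sin_gt_zero) auto
  from pos[of u] pos[of "-u"] assms show "0 < sin (u/2) \<longleftrightarrow> 0 < u" "sin (u/2) < 0 \<longleftrightarrow> u < 0"
    by (cases u "0::real" rule: linorder_cases; auto)+
qed

lemma side_sign_iff:
  assumes "a \<in> S1" "b \<in> S1" "z \<in> S1"
  defines "x \<equiv> Arg2pi a" and "y \<equiv> Arg2pi b" and "w \<equiv> Arg2pi z"
  shows "0 < side a b z \<longleftrightarrow> x \<noteq> y \<and> w \<noteq> x \<and> w \<noteq> y \<and> (x < y \<longleftrightarrow> \<not> strictly_between x y w)"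
    and "side a b z < 0 \<longleftrightarrow> x \<noteq> y \<and> w \<noteq> x \<and> w \<noteq> y \<and> (x < y \<longleftrightarrow> strictly_between x y w)"
proof -
  have e: "side a b z = 4 * sin ((w - y)/2) * sin ((y - x)/2) * sin ((w - x)/2)"
    using side_cis[of x y w] assms by (simp add: cis_Arg2pi)
  have "\<bar>w - y\<bar> < 2*pi" "\<bar>y - x\<bar> < 2*pi" "\<bar>w - x\<bar> < 2*pi"
    unfolding x_def y_def w_def using Arg2pi_ge_0 Arg2pi_lt_2pi by (smt (verit))+
  note s = sin_half_pos_iff[OF this(1)] sin_half_pos_iff[OF this(2)] sin_half_pos_iff[OF this(3)]
  show "0 < side a b z \<longleftrightarrow> x \<noteq> y \<and> w \<noteq> x \<and> w \<noteq> y \<and> (x < y \<longleftrightarrow> \<not> strictly_between x y w)"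
    unfolding e strictly_between_def using s by (auto simp: zero_less_mult_iff mult_less_0_iff)
  show "side a b z < 0 \<longleftrightarrow> x \<noteq> y \<and> w \<noteq> x \<and> w \<noteq> y \<and> (x < y \<longleftrightarrow> strictly_between x y w)"
    unfolding e strictly_between_def using s by (auto simp: zero_less_mult_iff mult_less_0_iff)
qed

lemma side_self [simp]: "side a b a = 0" "side a b b = 0" "side a a z = 0"
  by (simp_all add: side_def algebra_simps)

lemma side_eq_0_iff:
  assumes "a \<in> S1" "b \<in> S1" "z \<in> S1"
  shows "side a b z = 0 \<longleftrightarrow> z = a \<or> z = b \<or> a = b"
proof -
  have "side a b z = 0 \<longleftrightarrow> Arg2pi z = Arg2pi a \<or> Arg2pi z = Arg2pi b \<or> Arg2pi a = Arg2pi b"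
    using side_sign_iff[OF assms] by (smt (verit))
  then show ?thesis
    using Arg2pi_inj_S1 assms by metis
qed

lemma side_mult_neg_iff:
  assumes "a \<in> S1" "b \<in> S1" "c \<in> S1" "d \<in> S1"
  shows "side a b c * side a b d < 0 \<longleftrightarrow>
    interleaved (Arg2pi a) (Arg2pi b) (Arg2pi c) (Arg2pi d)"
  unfolding mult_less_0_iff interleaved_def side_sign_iff[OF assms(1,2,3)] side_sign_iff[OF assms(1,2,4)]
  by blast

lemma side_mult_pos_iff:
  assumes "a \<in> S1" "b \<in> S1" "c \<in> S1" "d \<in> S1"
  defines "x \<equiv> Arg2pi a" and "y \<equiv> Arg2pi b"
  shows "0 < side a b c * side a b d \<longleftrightarrow>
    x \<noteq> y \<and> Arg2pi c \<notin> {x, y} \<and> Arg2pi d \<notin> {x, y} \<and>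
    strictly_between x y (Arg2pi c) = strictly_between x y (Arg2pi d)"
  unfolding zero_less_mult_iff x_def y_def side_sign_iff[OF assms(1,2,3)] side_sign_iff[OF assms(1,2,4)]
  by auto

lemma cis_arcs_subset:
  assumes "a \<in> S1" "b \<in> S1" "Arg2pi a < Arg2pi b"
  shows "cis ` {Arg2pi a<..<Arg2pi b} \<subseteq> S1 - {a, b}"
    and "cis ` {Arg2pi b<..<Arg2pi a + 2*pi} \<subseteq> S1 - {a, b}"
proof -
  have avoid: "z \<in> S1 - {a, b}" if "z \<in> S1" "Arg2pi z \<noteq> Arg2pi a" "Arg2pi z \<noteq> Arg2pi b" for z
    using that by auto
  note range = Arg2pi_ge_0[of a] Arg2pi_lt_2pi[of a] Arg2pi_ge_0[of b] Arg2pi_lt_2pi[of b]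
  show "cis ` {Arg2pi a<..<Arg2pi b} \<subseteq> S1 - {a, b}"
  proof
    fix z assume "z \<in> cis ` {Arg2pi a<..<Arg2pi b}"
    then obtain t where t: "z = cis t" "Arg2pi a < t" "t < Arg2pi b" by auto
    then have "Arg2pi z = t"
      using range by (simp add: Arg2pi_cis)
    then show "z \<in> S1 - {a, b}" using t by (auto intro!: avoid)
  qed
  show "cis ` {Arg2pi b<..<Arg2pi a + 2*pi} \<subseteq> S1 - {a, b}"
  proof
    fix z assume "z \<in> cis ` {Arg2pi b<..<Arg2pi a + 2*pi}"
    then obtain t where t: "z = cis t" "Arg2pi b < t" "t < Arg2pi a + 2*pi" by auto
    show "z \<in> S1 - {a, b}"
    proof (cases "t < 2*pi")
      case True
      then have "Arg2pi z = t"
        using t range by (simp add: Arg2pi_cis)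
      then show ?thesis using t assms(3) by (auto intro!: avoid)
    next
      case False
      have "z = cis (t - 2*pi)"
        using t(1) by (simp add: cis_divide[symmetric])
      then have "Arg2pi z = t - 2*pi"
        using t range False by (simp add: Arg2pi_cis)
      then show ?thesis using t range False assms(3) by (auto intro!: avoid)
    qed
  qed
qed

lemma mem_cis_arcs:
  assumes "a \<in> S1" "b \<in> S1" "Arg2pi a < Arg2pi b" "z \<in> S1 - {a, b}"
  shows "strictly_between (Arg2pi a) (Arg2pi b) (Arg2pi z) \<Longrightarrow> z \<in> cis ` {Arg2pi a<..<Arg2pi b}"
    and "\<not> strictly_between (Arg2pi a) (Arg2pi b) (Arg2pi z) \<Longrightarrow> z \<in> cis ` {Arg2pi b<..<Arg2pi a + 2*pi}"
proof -
  have z: "z = cis (Arg2pi z)" "Arg2pi z \<noteq> Arg2pi a" "Arg2pi z \<noteq> Arg2pi b"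
    using assms cis_Arg2pi Arg2pi_inj_S1 by auto
  show "strictly_between (Arg2pi a) (Arg2pi b) (Arg2pi z) \<Longrightarrow> z \<in> cis ` {Arg2pi a<..<Arg2pi b}"
    using z assms(3) unfolding strictly_between_def by (auto intro!: image_eqI[where x="Arg2pi z"])
  assume "\<not> strictly_between (Arg2pi a) (Arg2pi b) (Arg2pi z)"
  then consider "Arg2pi z < Arg2pi a" | "Arg2pi b < Arg2pi z"
    using z assms(3) unfolding strictly_between_def by linarith
  then show "z \<in> cis ` {Arg2pi b<..<Arg2pi a + 2*pi}"
  proof cases
    case 1
    then have "z = cis (Arg2pi z + 2*pi)" "Arg2pi z + 2*pi \<in> {Arg2pi b<..<Arg2pi a + 2*pi}"
      using z(1) Arg2pi_ge_0[of z] Arg2pi_lt_2pi[of b] by (auto simp: cis_mult[symmetric])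
    then show ?thesis by blast
  next
    case 2
    then show ?thesis
      using z(1) Arg2pi_ge_0[of a] Arg2pi_lt_2pi[of z] by (auto intro!: image_eqI[where x="Arg2pi z"])
  qed
qed

lemma connected_component_S1_minus_pair_ordered:
  assumes "a \<in> S1" "b \<in> S1" "Arg2pi a < Arg2pi b" "c \<in> S1 - {a, b}" "d \<in> S1 - {a, b}"
    and "strictly_between (Arg2pi a) (Arg2pi b) (Arg2pi c) = strictly_between (Arg2pi a) (Arg2pi b) (Arg2pi d)"
  shows "connected_component (S1 - {a, b}) c d"
proof -
  have "connected (cis ` {x<..<y})" for x y
    by (intro connected_continuous_image continuous_on_cis continuous_on_id) simp
  then show ?thesis
    using mem_cis_arcs[OF assms(1-3,4)] mem_cis_arcs[OF assms(1-3,5)] cis_arcs_subset[OF assms(1-3)] assms(6)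
    unfolding connected_component_def by (cases "strictly_between (Arg2pi a) (Arg2pi b) (Arg2pi c)") metis+
qed

lemma connected_component_S1_minus_pair_iff:
  assumes "a \<in> S1" "b \<in> S1" "a \<noteq> b" "c \<in> S1 - {a, b}" "d \<in> S1 - {a, b}"
  shows "connected_component (S1 - {a, b}) c d \<longleftrightarrow> 0 < side a b c * side a b d"
proof
  assume "connected_component (S1 - {a, b}) c d"
  then obtain T where T: "connected T" "T \<subseteq> S1 - {a, b}" "c \<in> T" "d \<in> T"
    unfolding connected_component_def by blast
  have "connected (side a b ` T)"
    by (intro connected_continuous_image T(1)) (auto simp: side_def intro!: continuous_intros)
  moreover have "0 \<notin> side a b ` T"
    using side_eq_0_iff[OF assms(1,2)] T(2) assms(3) by auto
  ultimately show "0 < side a b c * side a b d"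
    using connected_contains_Icc[of "side a b ` T" "side a b c" "side a b d"]
      connected_contains_Icc[of "side a b ` T" "side a b d" "side a b c"] T(3,4)
    by (force simp: zero_less_mult_iff not_less subset_eq)
next
  assume pos: "0 < side a b c * side a b d"
  have "Arg2pi a \<noteq> Arg2pi b"
    using assms Arg2pi_inj_S1 by blast
  moreover have "strictly_between (Arg2pi a) (Arg2pi b) (Arg2pi c) = strictly_between (Arg2pi a) (Arg2pi b) (Arg2pi d)"
    using pos side_mult_pos_iff assms by auto
  moreover have "{b, a} = {a, b}" "strictly_between x y = strictly_between y x" for x y
    by (auto simp: strictly_between_def fun_eq_iff)
  ultimately show "connected_component (S1 - {a, b}) c d"
    using connected_component_S1_minus_pair_ordered[of a b c d]
      connected_component_S1_minus_pair_ordered[of b a c d] assms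
    by (cases "Arg2pi a < Arg2pi b") auto
qed

lemma linked_iff_side:
  "linked a b c d \<longleftrightarrow> a \<in> S1 \<and> b \<in> S1 \<and> c \<in> S1 \<and> d \<in> S1 \<and> side a b c * side a b d < 0"
proof (cases "a \<in> S1 \<and> b \<in> S1 \<and> c \<in> S1 \<and> d \<in> S1 \<and> a \<noteq> b \<and> c \<notin> {a, b} \<and> d \<notin> {a, b}")
  case True
  then have "side a b c \<noteq> 0" "side a b d \<noteq> 0"
    using side_eq_0_iff by auto
  then have "0 < side a b c * side a b d \<or> side a b c * side a b d < 0"
    "c = d \<Longrightarrow> 0 < side a b c * side a b d"
    by (auto simp: zero_less_mult_iff mult_less_0_iff)
  moreover have "linked a b c d \<longleftrightarrow> c \<noteq> d \<and> \<not> 0 < side a b c * side a b d"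
    using True connected_component_S1_minus_pair_iff[of a b c d] unfolding linked_def by auto
  ultimately show ?thesis
    using True by auto
next
  case False
  then show ?thesis
    by (auto simp: linked_def)
qed

lemma linked_iff_interleaved:
  "linked a b c d \<longleftrightarrow> a \<in> S1 \<and> b \<in> S1 \<and> c \<in> S1 \<and> d \<in> S1 \<and>
    interleaved (Arg2pi a) (Arg2pi b) (Arg2pi c) (Arg2pi d)"
  using linked_iff_side side_mult_neg_iff by blast

lemma side_divide_S1: "q \<in> S1 \<Longrightarrow> side (a / q) (b / q) (z / q) = side a b z"
proof -
  assume "q \<in> S1"
  then have "cnj q * q = 1"
    by (simp add: in_S1_iff complex_norm_square[symmetric] mult.commute)
  have "cnj (b / q - a / q) * (z / q - a / q) = cnj (b - a) / cnj q * ((z - a) / q)"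
    by (simp add: diff_divide_distrib)
  also have "\<dots> = cnj (b - a) * (z - a)"
    using \<open>cnj q * q = 1\<close> by simp
  finally show ?thesis
    by (simp add: side_def)
qed

lemma linked_iff_interleaved_from:
  assumes "q \<in> S1"
  shows "linked a b c d \<longleftrightarrow> a \<in> S1 \<and> b \<in> S1 \<and> c \<in> S1 \<and> d \<in> S1 \<and>
    interleaved (Arg2pi (a / q)) (Arg2pi (b / q)) (Arg2pi (c / q)) (Arg2pi (d / q))"
  using linked_iff_side[of a b c d] linked_iff_interleaved[of "a / q" "b / q" "c / q" "d / q"]
    linked_iff_side[of "a / q" "b / q" "c / q" "d / q"]
  by (simp add: side_divide_S1 divide_in_S1_iff assms)

lemma linked_in_S1: "linked a b c d \<Longrightarrow> a \<in> S1 \<and> b \<in> S1 \<and> c \<in> S1 \<and> d \<in> S1"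
  unfolding linked_def by auto

lemma linked_distinct: "linked a b c d \<Longrightarrow> a \<noteq> b \<and> c \<noteq> d \<and> a \<noteq> c \<and> a \<noteq> d \<and> b \<noteq> c \<and> b \<noteq> d"
  unfolding linked_def by auto

lemma linked_commute: "linked a b c d \<Longrightarrow> linked c d a b"
  unfolding linked_iff_interleaved using interleaved_commute by blast

lemma linked_sym: "linked b a c d \<longleftrightarrow> linked a b c d" "linked a b d c \<longleftrightarrow> linked a b c d"
  unfolding linked_iff_interleaved using interleaved_swap by blast+

lemma linked_triangle:
  assumes "linked a c x y" "b \<in> S1" "a \<noteq> b" "b \<noteq> c" "x \<noteq> b" "y \<noteq> b"
  shows "linked a b x y \<or> linked b c x y"
proof -
  have S1: "a \<in> S1" "c \<in> S1" "x \<in> S1" "y \<in> S1"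
    using assms(1) linked_in_S1 by auto
  then have "Arg2pi a \<noteq> Arg2pi b" "Arg2pi b \<noteq> Arg2pi c" "Arg2pi x \<noteq> Arg2pi b" "Arg2pi y \<noteq> Arg2pi b"
    using assms(2-6) Arg2pi_inj_S1 by metis+
  then show ?thesis
    using assms(1,2) S1 interleaved_triangle unfolding linked_iff_interleaved by blast
qed

lemma linked_diagonal: "linked a b c d \<Longrightarrow> linked a c u v \<Longrightarrow> linked a b u v \<or> linked c d u v"
  unfolding linked_iff_interleaved using interleaved_diagonal by blast

section \<open>Sides of convex hulls\<close>

lemma side_affine: "side a b ((1 - s) *\<^sub>R x + s *\<^sub>R y) = (1 - s) * side a b x + s * side a b y"
  by (simp add: side_def scaleR_conv_of_real algebra_simps)

lemma side_closed_segment: "p \<in> closed_segment a b \<Longrightarrow> side a b p = 0"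
  by (auto simp: in_segment side_affine)

lemma side_eq_inner: "side a b z = inner (\<i> * (b - a)) z - inner (\<i> * (b - a)) a"
  by (simp add: side_def inner_complex_def algebra_simps)

lemma complex_cramer:
  "of_real (Im (cnj u * v)) * h = of_real (Im (cnj u * h)) * v - of_real (Im (cnj v * h)) * u"
  by (simp add: complex_eq_iff algebra_simps)

lemma lines_intersection_unique:
  assumes "Im (cnj (b - a) * (d - c)) \<noteq> 0"
    and "side a b p = 0" "side a b q = 0" "side c d p = 0" "side c d q = 0"
  shows "p = q"
proof -
  have "Im (cnj (b - a) * (p - q)) = 0" "Im (cnj (d - c) * (p - q)) = 0"
    using assms(2-5) by (simp_all add: side_def algebra_simps)
  then have "of_real (Im (cnj (b - a) * (d - c))) * (p - q) = 0"
    using complex_cramer[of "b - a" "d - c" "p - q"] by simp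
  then show ?thesis
    using assms(1) by (metis mult_eq_0_iff of_real_eq_0_iff right_minus_eq)
qed

lemma open_segment_meets_line:
  assumes "side a b z1 * side a b z2 < 0"
  obtains p where "p \<in> open_segment z1 z2" "side a b p = 0"
proof
  define s where "s = side a b z1 / (side a b z1 - side a b z2)"
  have "0 < s" "s < 1" "side a b z1 \<noteq> side a b z2"
    using assms by (auto simp: s_def mult_less_0_iff divide_less_eq zero_less_divide_iff)
  then show "(1 - s) *\<^sub>R z1 + s *\<^sub>R z2 \<in> open_segment z1 z2"
    by (auto simp: in_segment)
  have "side a b ((1 - s) *\<^sub>R z1 + s *\<^sub>R z2) = side a b z1 - s * (side a b z1 - side a b z2)"
    unfolding side_affine by (simp add: algebra_simps)
  then show "side a b ((1 - s) *\<^sub>R z1 + s *\<^sub>R z2) = 0"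
    using \<open>side a b z1 \<noteq> side a b z2\<close> by (simp add: s_def)
qed

lemma small_vectors_as_combinations:
  fixes u v :: complex
  assumes "Im (cnj u * v) \<noteq> 0" "0 < \<delta>"
  obtains \<epsilon> where "0 < \<epsilon>"
    "\<And>h. cmod h < \<epsilon> \<Longrightarrow> \<exists>\<alpha> \<beta>. h = of_real \<alpha> * u + of_real \<beta> * v \<and> \<bar>\<alpha>\<bar> \<le> \<delta> \<and> \<bar>\<beta>\<bar> \<le> \<delta>"
proof
  define D where "D = Im (cnj u * v)"
  define K where "K = cmod u + cmod v + 1"
  have "0 < K"
    unfolding K_def using norm_ge_zero[of u] norm_ge_zero[of v] by linarith
  have "\<bar>D\<bar> > 0"
    using assms(1) by (simp add: D_def)
  show "0 < \<delta> * \<bar>D\<bar> / K"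
    using \<open>0 < K\<close> \<open>\<bar>D\<bar> > 0\<close> assms(2) by simp
  fix h assume h: "cmod h < \<delta> * \<bar>D\<bar> / K"
  have small: "\<bar>Im (cnj w * h) / D\<bar> \<le> \<delta>" if "cmod w \<le> K" for w
  proof -
    have "\<bar>Im (cnj w * h)\<bar> \<le> cmod w * cmod h"
      using abs_Im_le_cmod[of "cnj w * h"] by (simp add: norm_mult)
    also have "\<dots> \<le> K * (\<delta> * \<bar>D\<bar> / K)"
      using that h \<open>0 < K\<close> by (intro mult_mono) auto
    finally show ?thesis
      using \<open>0 < K\<close> \<open>\<bar>D\<bar> > 0\<close> by (simp add: abs_divide divide_le_eq)
  qed
  have "of_real (- Y / D) * u + of_real (X / D) * v = (of_real X * v - of_real Y * u) / of_real D"
    for X Y :: real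
    by (simp add: diff_divide_distrib algebra_simps)
  then have "of_real (- Im (cnj v * h) / D) * u + of_real (Im (cnj u * h) / D) * v
      = (of_real (Im (cnj u * h)) * v - of_real (Im (cnj v * h)) * u) / of_real D" .
  also have "\<dots> = of_real D * h / of_real D"
    using complex_cramer[of u v h] by (simp add: D_def)
  also have "\<dots> = h"
    using \<open>\<bar>D\<bar> > 0\<close> by simp
  finally have "h = of_real (- Im (cnj v * h) / D) * u + of_real (Im (cnj u * h) / D) * v" ..
  moreover have "cmod u \<le> K" "cmod v \<le> K"
    by (simp_all add: K_def)
  ultimately show "\<exists>\<alpha> \<beta>. h = of_real \<alpha> * u + of_real \<beta> * v \<and> \<bar>\<alpha>\<bar> \<le> \<delta> \<and> \<bar>\<beta>\<bar> \<le> \<delta>"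
    using small by (metis abs_minus_cancel minus_divide_left)
qed

lemma crossing_segments_interior:
  fixes C :: "complex set"
  assumes C: "convex C" "a \<in> C" "b \<in> C" "z1 \<in> C" "z2 \<in> C"
    and p: "p \<in> open_segment a b" "p \<in> open_segment z1 z2"
    and nonparallel: "Im (cnj (b - a) * (z2 - z1)) \<noteq> 0"
  shows "p \<in> interior C"
proof -
  have line: "x + of_real t * (y - x) = (1 - t) *\<^sub>R x + t *\<^sub>R y" for x y :: complex and t
    by (simp add: scaleR_conv_of_real algebra_simps)
  have in_C: "x + of_real t * (y - x) \<in> C" if "x \<in> C" "y \<in> C" "0 \<le> t" "t \<le> 1" for x y t
    using that C(1) unfolding line by (simp add: convexD)
  obtain l s where l: "0 < l" "l < 1" "p = a + of_real l * (b - a)"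
    and s: "0 < s" "s < 1" "p = z1 + of_real s * (z2 - z1)"
    using p unfolding in_segment line by metis
  define \<delta> where "\<delta> = min (min l (1 - l)) (min s (1 - s)) / 2"
  have "0 < \<delta>"
    using l s by (simp add: \<delta>_def)
  then obtain \<epsilon> where "0 < \<epsilon>" and \<epsilon>: "\<And>h. cmod h < \<epsilon> \<Longrightarrow>
      \<exists>\<alpha> \<beta>. h = of_real \<alpha> * (b - a) + of_real \<beta> * (z2 - z1) \<and> \<bar>\<alpha>\<bar> \<le> \<delta> \<and> \<bar>\<beta>\<bar> \<le> \<delta>"
    using small_vectors_as_combinations[OF nonparallel] by blast
  have "ball p \<epsilon> \<subseteq> C"
  proof
    fix y assume "y \<in> ball p \<epsilon>"
    then obtain \<alpha> \<beta> where h: "y - p = of_real \<alpha> * (b - a) + of_real \<beta> * (z2 - z1)"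
      and "\<bar>\<alpha>\<bar> \<le> \<delta>" "\<bar>\<beta>\<bar> \<le> \<delta>"
      using \<epsilon>[of "y - p"] by (auto simp: dist_norm norm_minus_commute)
    then have "a + of_real (l + 2*\<alpha>) * (b - a) \<in> C" "z1 + of_real (s + 2*\<beta>) * (z2 - z1) \<in> C"
      using l s C by (intro in_C; auto simp: \<delta>_def)+
    moreover have "a + of_real (l + 2*\<alpha>) * (b - a) = p + 2 * (of_real \<alpha> * (b - a))"
      using l(3) by (simp add: algebra_simps)
    moreover have "z1 + of_real (s + 2*\<beta>) * (z2 - z1) = p + 2 * (of_real \<beta> * (z2 - z1))"
      using s(3) by (simp add: algebra_simps)
    \<comment> \<open>\<open>y\<close> is the midpoint of two points of the segments, pushed out from \<open>p\<close> twice as far\<close>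
    ultimately have "(1/2) *\<^sub>R (p + 2 * (of_real \<alpha> * (b - a))) + (1/2) *\<^sub>R (p + 2 * (of_real \<beta> * (z2 - z1))) \<in> C"
      by (intro convexD[OF C(1)]) auto
    also have "(1/2) *\<^sub>R (p + 2 * (of_real \<alpha> * (b - a))) + (1/2) *\<^sub>R (p + 2 * (of_real \<beta> * (z2 - z1))) = y"
      using h by (simp add: scaleR_conv_of_real algebra_simps)
    finally show "y \<in> C" .
  qed
  then show ?thesis
    using \<open>0 < \<epsilon>\<close> mem_interior by blast
qed

lemma segment_subset_frontier_hull:
  assumes "a \<in> \<nu>" "b \<in> \<nu>" "a \<noteq> b"
    and one_side: "(\<forall>z\<in>\<nu>. 0 \<le> side a b z) \<or> (\<forall>z\<in>\<nu>. side a b z \<le> 0)"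
  shows "closed_segment a b \<subseteq> frontier (convex hull \<nu>)"
proof
  fix p assume p: "p \<in> closed_segment a b"
  define n where "n = \<i> * (b - a)"
  have "n \<noteq> 0"
    using assms(3) by (simp add: n_def)
  have on_line: "inner n p = inner n a"
    using side_closed_segment[OF p] by (simp add: side_eq_inner n_def)
  have "p \<in> convex hull \<nu>"
    using p assms(1,2) by (meson closed_segment_subset convex_convex_hull hull_inc subsetD)
  moreover have "p \<notin> interior (convex hull \<nu>)"
    using one_side
  proof
    assume "\<forall>z\<in>\<nu>. 0 \<le> side a b z"
    then have "convex hull \<nu> \<subseteq> {z. inner n z \<ge> inner n a}"
      by (intro hull_minimal convex_halfspace_ge) (auto simp: side_eq_inner n_def)
    then have "interior (convex hull \<nu>) \<subseteq> {z. inner n z > inner n a}"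
      using interior_mono interior_halfspace_ge[OF \<open>n \<noteq> 0\<close>] by metis
    then show ?thesis
      using on_line by auto
  next
    assume "\<forall>z\<in>\<nu>. side a b z \<le> 0"
    then have "convex hull \<nu> \<subseteq> {z. inner n z \<le> inner n a}"
      by (intro hull_minimal convex_halfspace_le) (auto simp: side_eq_inner n_def)
    then have "interior (convex hull \<nu>) \<subseteq> {z. inner n z < inner n a}"
      using interior_mono interior_halfspace_le[OF \<open>n \<noteq> 0\<close>] by metis
    then show ?thesis
      using on_line by auto
  qed
  ultimately show "p \<in> frontier (convex hull \<nu>)"
    using closure_subset by (auto simp: frontier_def)
qed

lemma frontier_segment_unlinked:
  assumes "\<nu> \<subseteq> S1" "a \<in> \<nu>" "b \<in> \<nu>" "z1 \<in> \<nu>" "z2 \<in> \<nu>"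
    and frontier: "closed_segment a b \<subseteq> frontier (convex hull \<nu>)"
  shows "\<not> linked a b z1 z2"
proof
  assume "linked a b z1 z2"
  then have cross: "side a b z1 * side a b z2 < 0" "side z1 z2 a * side z1 z2 b < 0"
    using linked_commute linked_iff_side by blast+
  obtain p where p: "p \<in> open_segment z1 z2" "side a b p = 0"
    using open_segment_meets_line[OF cross(1)] .
  obtain q where q: "q \<in> open_segment a b" "side z1 z2 q = 0"
    using open_segment_meets_line[OF cross(2)] .
  have "side a b z1 \<noteq> side a b z2"
    using cross(1) by (metis not_square_less_zero)
  moreover have "side a b z2 - side a b z1 = Im (cnj (b - a) * (z2 - z1))"
    by (simp add: side_def algebra_simps)
  ultimately have nonparallel: "Im (cnj (b - a) * (z2 - z1)) \<noteq> 0"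
    by simp
  have "side z1 z2 p = 0" "side a b q = 0"
    using p(1) q(1) by (simp_all add: open_closed_segment side_closed_segment)
  then have "p = q"
    using lines_intersection_unique[OF nonparallel] p(2) q(2) by blast
  then have "p \<in> interior (convex hull \<nu>)"
    using p q assms(2-5) by (intro crossing_segments_interior[OF _ _ _ _ _ _ _ nonparallel])
      (auto intro: hull_inc)
  moreover have "p \<in> frontier (convex hull \<nu>)"
    using \<open>p = q\<close> q(1) frontier open_closed_segment by blast
  ultimately show False
    by (simp add: frontier_def)
qed

lemma segment_subset_frontier_hull_iff_unlinked:
  assumes "\<nu> \<subseteq> S1" "a \<in> \<nu>" "b \<in> \<nu>" "a \<noteq> b"
  shows "closed_segment a b \<subseteq> frontier (convex hull \<nu>) \<longleftrightarrow> (\<forall>z1\<in>\<nu>. \<forall>z2\<in>\<nu>. \<not> linked a b z1 z2)"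
proof
  assume unlinked: "\<forall>z1\<in>\<nu>. \<forall>z2\<in>\<nu>. \<not> linked a b z1 z2"
  have "(\<forall>z\<in>\<nu>. 0 \<le> side a b z) \<or> (\<forall>z\<in>\<nu>. side a b z \<le> 0)"
  proof (rule ccontr)
    assume "\<not> ?thesis"
    then obtain z1 z2 where "z1 \<in> \<nu>" "z2 \<in> \<nu>" "side a b z1 * side a b z2 < 0"
      by (auto simp: not_le mult_neg_pos)
    then show False
      using unlinked assms(1-3) linked_iff_side by blast
  qed
  then show "closed_segment a b \<subseteq> frontier (convex hull \<nu>)"
    using segment_subset_frontier_hull assms(2-4) by blast
qed (use frontier_segment_unlinked assms in blast)

lemma equiv_same_class: "equiv A r \<Longrightarrow> a \<in> r``{x} \<Longrightarrow> b \<in> r``{x} \<Longrightarrow> (a, b) \<in> r"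
  using equiv_class_eq_iff by (metis Image_singleton_iff)

lemma mem_Lam_iff:
  assumes R: "equiv S1 R"
  shows "(p, q) \<in> Lam R \<longleftrightarrow> p \<noteq> q \<and> (p, q) \<in> R \<and> (\<forall>z1\<in>R``{p}. \<forall>z2\<in>R``{p}. \<not> linked p q z1 z2)"
    (is "_ \<longleftrightarrow> _ \<and> _ \<and> ?unlinked")
proof
  assume "(p, q) \<in> Lam R"
  then obtain x where pq: "p \<in> R``{x}" "q \<in> R``{x}" "p \<noteq> q"
    and sides: "R``{x} = {p, q} \<or> closed_segment p q \<subseteq> frontier (convex hull (R``{x}))"
    unfolding Lam_def Let_def by blast
  have "R``{x} = R``{p}"
    using pq(1) R by (simp add: equiv_class_eq)
  moreover have "R``{x} \<subseteq> S1"
    using R by (auto simp: equiv_def refl_on_def)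
  ultimately show "p \<noteq> q \<and> (p, q) \<in> R \<and> ?unlinked"
    using sides pq segment_subset_frontier_hull_iff_unlinked[of "R``{p}" p q]
    by (auto dest: linked_distinct)
next
  assume pq: "p \<noteq> q \<and> (p, q) \<in> R \<and> ?unlinked"
  then have "p \<in> S1" "R``{p} \<subseteq> S1" "{p, q} \<subseteq> R``{p}"
    using R by (auto simp: equiv_def refl_on_def)
  then have "R``{p} = {p, q} \<or> (infinite (R``{p}) \<or> card (R``{p}) > 2) \<and>
      closed_segment p q \<subseteq> frontier (convex hull (R``{p}))"
    using pq segment_subset_frontier_hull_iff_unlinked[of "R``{p}" p q] card_mono[of "R``{p}" "{p, q}"]
      card_subset_eq[of "R``{p}" "{p, q}"] by force
  then have "(finite (R``{p}) \<and> card (R``{p}) = 2 \<and> {p, q} = R``{p} \<and> p \<noteq> q) \<or>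
      ((infinite (R``{p}) \<or> card (R``{p}) > 2) \<and> p \<in> R``{p} \<and> q \<in> R``{p} \<and> p \<noteq> q \<and>
        closed_segment p q \<subseteq> frontier (convex hull (R``{p})))"
    using pq \<open>{p, q} \<subseteq> R``{p}\<close> by auto
  then show "(p, q) \<in> Lam R"
    unfolding Lam_def Let_def using \<open>p \<in> S1\<close> by blast
qed

lemma finite_card_le_2_if_no_three:
  assumes "\<And>x y z. x \<in> Q \<Longrightarrow> y \<in> Q \<Longrightarrow> z \<in> Q \<Longrightarrow> distinct [x, y, z] \<Longrightarrow> False"
  shows "finite Q \<and> card Q \<le> 2"
proof (rule ccontr)
  assume "\<not> (finite Q \<and> card Q \<le> 2)"
  then obtain B where "B \<subseteq> Q" "card B = 3"
    by (metis infinite_arbitrarily_large not_le obtain_subset_with_card_n Suc_leI numeral_3_eq_3 numeral_2_eq_2)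
  then obtain x y z where "B = {x, y, z}" "distinct [x, y, z]"
    by (auto simp: card_3_iff)
  then show False
    using assms \<open>B \<subseteq> Q\<close> by blast
qed

theorem at_most_two_leaves_Lam:
  assumes R: "equiv S1 R"
  shows "at_most_two_leaves (Lam R)"
  unfolding at_most_two_leaves_def
proof (intro ballI finite_card_le_2_if_no_three)
  fix p q1 q2 q3 assume p: "p \<in> S1" and q: "q1 \<in> {q. (p, q) \<in> Lam R}" "q2 \<in> {q. (p, q) \<in> Lam R}"
    "q3 \<in> {q. (p, q) \<in> Lam R}" and "distinct [q1, q2, q3]"
  then have leaf: "p \<noteq> q \<and> (p, q) \<in> R \<and> (\<forall>z1\<in>R``{p}. \<forall>z2\<in>R``{p}. \<not> linked p q z1 z2)"
    if "q \<in> {q1, q2, q3}" for q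
    using that mem_Lam_iff[OF R] by auto
  then have "{q1, q2, q3} \<subseteq> S1"
    using R by (auto simp: equiv_def refl_on_def)
  then have "distinct [Arg2pi p, Arg2pi q1, Arg2pi q2, Arg2pi q3]"
    using p leaf \<open>distinct [q1, q2, q3]\<close> Arg2pi_inj_S1 by auto
  then have "linked p q1 q2 q3 \<or> linked p q2 q1 q3 \<or> linked p q3 q1 q2"
    using interleaved_three_chords p \<open>{q1, q2, q3} \<subseteq> S1\<close> linked_iff_interleaved by auto
  then show False
    using leaf by blast
qed

section \<open>Chords crossed by no leaf\<close>

definition uncrossed :: "(complex \<times> complex) set \<Rightarrow> complex \<Rightarrow> complex \<Rightarrow> bool" where
  "uncrossed \<Lambda> a b \<longleftrightarrow> (\<forall>(c, d) \<in> \<Lambda>. \<not> linked a b c d)"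

definition uncrossed_rel :: "(complex \<times> complex) set \<Rightarrow> (complex \<times> complex) set" where
  "uncrossed_rel \<Lambda> = {(a, b). a \<in> S1 \<and> b \<in> S1 \<and> uncrossed \<Lambda> a b}"

lemma uncrossed_sym: "uncrossed \<Lambda> a b \<Longrightarrow> uncrossed \<Lambda> b a"
  unfolding uncrossed_def using linked_sym by blast

lemma uncrossed_refl: "uncrossed \<Lambda> a a"
  unfolding uncrossed_def linked_def by auto

lemma uncrossed_diagonal:
  assumes "linked a b c d" "uncrossed \<Lambda> a b" "uncrossed \<Lambda> c d"
  shows "uncrossed \<Lambda> a c"
  using assms linked_diagonal unfolding uncrossed_def by blast

lemma open_side_mult_neg: "open {p. side a b (fst p) * side a b (snd p) < 0}"
  unfolding side_def by (intro open_Collect_less continuous_intros)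

lemma closed_uncrossed_rel:
  assumes "\<Lambda> \<subseteq> S1 \<times> S1"
  shows "closed (uncrossed_rel \<Lambda>)"
proof -
  have uncrossed_iff: "uncrossed \<Lambda> a b \<longleftrightarrow> (\<forall>l\<in>\<Lambda>. 0 \<le> side a b (fst l) * side a b (snd l))"
    if "a \<in> S1" "b \<in> S1" for a b
    using that assms by (force simp: uncrossed_def linked_iff_side not_less)
  have "uncrossed_rel \<Lambda> =
      (S1 \<times> S1) \<inter> (\<Inter>l\<in>\<Lambda>. {p. 0 \<le> side (fst p) (snd p) (fst l) * side (fst p) (snd p) (snd l)})"
  proof (intro set_eqI)
    fix p :: "complex \<times> complex"
    show "p \<in> uncrossed_rel \<Lambda> \<longleftrightarrow> p \<in> (S1 \<times> S1) \<inter>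
        (\<Inter>l\<in>\<Lambda>. {p. 0 \<le> side (fst p) (snd p) (fst l) * side (fst p) (snd p) (snd l)})"
      by (cases p) (simp add: uncrossed_rel_def uncrossed_iff cong: conj_cong)
  qed
  moreover have "closed {p. 0 \<le> side (fst p) (snd p) c * side (fst p) (snd p) d}" for c d
    unfolding side_def by (intro closed_Collect_le continuous_intros)
  ultimately show ?thesis
    by (auto intro!: closed_Int closed_Times closed_S1 closed_INT)
qed

lemma closure_diff_countable_limit_points:
  fixes K :: "'a::{real_normed_vector,heine_borel} set"
  assumes "closed K" "countable S" "S \<subseteq> K" and limpt: "\<And>x. x \<in> S \<Longrightarrow> x islimpt K"
  shows "K \<subseteq> closure (K - S)"
proof (cases "S = {}")
  case False
  define G where "G = (\<lambda>x. K - {x}) ` S"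
  have "K \<subseteq> closure (\<Inter>G)"
  proof (rule Baire[OF assms(1)])
    show "countable G"
      using assms(2) by (simp add: G_def)
    fix T assume "T \<in> G"
    then obtain x where x: "x \<in> S" "T = K - {x}"
      by (auto simp: G_def)
    have "x \<in> closure T"
      using limpt[OF x(1)] by (simp add: x(2) islimpt_in_closure)
    then have "insert x T \<subseteq> closure T"
      using closure_subset by blast
    moreover have "openin (top_of_set K) T"
      unfolding x(2) by (intro openin_delete openin_subtopology_self)
    ultimately show "openin (top_of_set K) T \<and> K \<subseteq> closure T"
      using x by blast
  qed
  moreover have "\<Inter>G = K - S"
    using False by (auto simp: G_def)
  ultimately show ?thesis
    by simp
qed (simp add: closure_subset)

lemma countable_Int_open_has_isolated_point:
  fixes K :: "'a::{real_normed_vector,heine_borel} set"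
  assumes "closed K" "open U" "countable (K \<inter> U)" "K \<inter> U \<noteq> {}"
  obtains x where "x \<in> K \<inter> U" "\<not> x islimpt K"
proof -
  have "K - K \<inter> U = K - U"
    by blast
  then have "closure (K - K \<inter> U) = K - U"
    using closure_closed[OF closed_Diff[OF assms(1,2)]] by simp
  then have "\<not> K \<subseteq> closure (K - K \<inter> U)"
    using assms(4) by blast
  then show thesis
    using closure_diff_countable_limit_points[OF assms(1,3)] that by blast
qed

locale perfect_lamination =
  fixes \<Lambda> :: "(complex \<times> complex) set"
  assumes lamination: "lamination \<Lambda>"
    and finite_leaves_at: "p \<in> S1 \<Longrightarrow> finite {q. (p, q) \<in> \<Lambda>}"
    and leaf_islimpt: "l \<in> \<Lambda> \<Longrightarrow> l islimpt \<Lambda>"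
begin

lemma leafD: "(a, b) \<in> \<Lambda> \<Longrightarrow> a \<in> S1 \<and> b \<in> S1 \<and> a \<noteq> b"
  using lamination by (auto simp: lamination_def offdiag_def)

lemma leaf_sym: "(a, b) \<in> \<Lambda> \<Longrightarrow> (b, a) \<in> \<Lambda>"
  using lamination by (auto simp: lamination_def dest: symD)

lemma leaves_unlinked: "(a, b) \<in> \<Lambda> \<Longrightarrow> (c, d) \<in> \<Lambda> \<Longrightarrow> \<not> linked a b c d"
  using lamination by (auto simp: lamination_def)

lemma leaves_closed_offdiag:
  obtains C where "closed C" "\<Lambda> = offdiag \<inter> C"
  using lamination by (auto simp: lamination_def closedin_closed)

lemma leaf_in_uncrossed_rel: "(a, b) \<in> \<Lambda> \<Longrightarrow> (a, b) \<in> uncrossed_rel \<Lambda>"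
  using leafD leaves_unlinked by (auto simp: uncrossed_rel_def uncrossed_def)

text \<open>A leaf through \<open>b\<close> crossing \<open>a c\<close> is a limit of other leaves; since only finitely many
  leaves end at \<open>b\<close>, a nearby one crosses \<open>a c\<close> and avoids \<open>b\<close>.\<close>
lemma linked_leaf_moved_off_endpoint:
  assumes leaf: "(b, y) \<in> \<Lambda>" and crossing: "linked a c b y"
  obtains x' y' where "(x', y') \<in> \<Lambda>" "linked a c x' y'" "x' \<noteq> b" "y' \<noteq> b"
proof -
  have "b \<in> S1" "y \<noteq> b"
    using leafD[OF leaf] by auto
  obtain e0 where "0 < e0" and e0: "\<And>q. (b, q) \<in> \<Lambda> \<Longrightarrow> q \<noteq> y \<Longrightarrow> e0 \<le> dist y q"
    using finite_set_avoid[of "{q. (b, q) \<in> \<Lambda>} - {y}" y] finite_leaves_at[OF \<open>b \<in> S1\<close>] by auto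
  have "(b, y) \<in> {p. side a c (fst p) * side a c (snd p) < 0}"
    using crossing linked_iff_side by auto
  then obtain e1 where "0 < e1" and e1: "ball (b, y) e1 \<subseteq> {p. side a c (fst p) * side a c (snd p) < 0}"
    using open_side_mult_neg open_contains_ball by blast
  define e where "e = min e0 (min e1 (dist y b))"
  have "0 < e"
    using \<open>0 < e0\<close> \<open>0 < e1\<close> \<open>y \<noteq> b\<close> by (simp add: e_def)
  then obtain x' y' where l: "(x', y') \<in> \<Lambda>" "(x', y') \<noteq> (b, y)" "dist (x', y') (b, y) < e"
    using leaf_islimpt[OF leaf] unfolding islimpt_approachable by fastforce
  have "dist y' y < e"
    using dist_snd_le[of "(x', y')" "(b, y)"] l(3) by simp
  have "(x', y') \<in> ball (b, y) e1"
    using l(3) by (simp add: e_def dist_commute)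
  then have "linked a c x' y'"
    using e1 leafD[OF l(1)] crossing linked_iff_side by auto
  moreover have "x' \<noteq> b"
    using e0[of y'] l \<open>dist y' y < e\<close> by (auto simp: e_def dist_commute)
  moreover have "y' \<noteq> b"
    using \<open>dist y' y < e\<close> by (auto simp: e_def dist_commute)
  ultimately show thesis
    using that l(1) by blast
qed

lemma linked_leaf_avoiding:
  assumes "(x, y) \<in> \<Lambda>" "linked a c x y"
  obtains x' y' where "(x', y') \<in> \<Lambda>" "linked a c x' y'" "x' \<noteq> b" "y' \<noteq> b"
proof -
  consider "x \<noteq> b" "y \<noteq> b" | "x = b" | "y = b"
    by blast
  then show thesis
  proof cases
    case 1
    then show ?thesis using that assms by blast
  next
    case 2
    then show ?thesis using that linked_leaf_moved_off_endpoint assms by blast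
  next
    case 3
    then show ?thesis
      using that linked_leaf_moved_off_endpoint[of b x a c] assms leaf_sym linked_sym by blast
  qed
qed

lemma uncrossed_rel_trans:
  assumes ab: "(a, b) \<in> uncrossed_rel \<Lambda>" and bc: "(b, c) \<in> uncrossed_rel \<Lambda>"
  shows "(a, c) \<in> uncrossed_rel \<Lambda>"
proof (cases "a = b \<or> b = c")
  case False
  have "\<not> linked a c x y" if leaf: "(x, y) \<in> \<Lambda>" for x y
  proof
    assume "linked a c x y"
    then obtain x' y' where "(x', y') \<in> \<Lambda>" "linked a c x' y'" "x' \<noteq> b" "y' \<noteq> b"
      using linked_leaf_avoiding leaf by metis
    then have "linked a b x' y' \<or> linked b c x' y'"
      using linked_triangle False ab by (auto simp: uncrossed_rel_def)
    then show False
      using ab bc \<open>(x', y') \<in> \<Lambda>\<close> by (auto simp: uncrossed_rel_def uncrossed_def)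
  qed
  then show ?thesis
    using ab bc by (auto simp: uncrossed_rel_def uncrossed_def)
qed (use ab bc in auto)

lemma equiv_uncrossed_rel: "equiv S1 (uncrossed_rel \<Lambda>)"
proof (rule equivI)
  show "uncrossed_rel \<Lambda> \<subseteq> S1 \<times> S1"
    by (auto simp: uncrossed_rel_def)
  show "refl_on S1 (uncrossed_rel \<Lambda>)"
    using uncrossed_refl by (auto simp: refl_on_def uncrossed_rel_def)
  show "sym (uncrossed_rel \<Lambda>)"
    using uncrossed_sym by (auto simp: sym_def uncrossed_rel_def)
  show "trans (uncrossed_rel \<Lambda>)"
    using uncrossed_rel_trans by (rule transI)
qed

text \<open>The leaves crossing \<open>a b\<close> form a nonempty open part of a closed set without isolated
  points, so there are uncountably many of them.\<close>
lemma countable_crossings_imp_uncrossed: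
  assumes ab: "(a, b) \<in> offdiag" and countable: "countable {(c, d) \<in> \<Lambda>. linked a b c d}"
  shows "uncrossed \<Lambda> a b"
proof (rule ccontr)
  assume "\<not> uncrossed \<Lambda> a b"
  then obtain c d where cd: "(c, d) \<in> \<Lambda>" "linked a b c d"
    by (auto simp: uncrossed_def)
  obtain C where "closed C" and C: "\<Lambda> = offdiag \<inter> C"
    using leaves_closed_offdiag .
  define K where "K = C \<inter> S1 \<times> S1"
  define U where "U = {p. side a b (fst p) * side a b (snd p) < 0} \<inter> {p. fst p \<noteq> snd p}"
  have "closed K"
    using \<open>closed C\<close> closed_S1 by (simp add: K_def closed_Int closed_Times)
  moreover have "open U"
    unfolding U_def by (intro open_Int open_side_mult_neg open_Collect_neq continuous_intros)
  moreover have KU: "K \<inter> U \<subseteq> {(c, d) \<in> \<Lambda>. linked a b c d}"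
    using ab C by (auto simp: K_def U_def offdiag_def linked_iff_side)
  moreover have "(c, d) \<in> K \<inter> U"
    using cd C linked_iff_side linked_distinct by (auto simp: K_def U_def offdiag_def)
  moreover have "countable (K \<inter> U)"
    using countable KU countable_subset by blast
  ultimately obtain l where "l \<in> K \<inter> U" "\<not> l islimpt K"
    using countable_Int_open_has_isolated_point by blast
  moreover have "\<Lambda> \<subseteq> K"
    using C by (auto simp: K_def offdiag_def)
  ultimately show False
    using KU leaf_islimpt islimpt_subset by blast
qed

theorem Rel_eq_uncrossed_rel: "Rel \<Lambda> = uncrossed_rel \<Lambda>"
proof (rule antisym)
  have "closed (uncrossed_rel \<Lambda>)"
    using leafD by (intro closed_uncrossed_rel) auto
  then show "Rel \<Lambda> \<subseteq> uncrossed_rel \<Lambda>"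
    unfolding Rel_def using equiv_uncrossed_rel leaf_in_uncrossed_rel countable_crossings_imp_uncrossed
    by (intro Inter_lower) (auto simp: uncrossed_rel_def offdiag_def)
  show "uncrossed_rel \<Lambda> \<subseteq> Rel \<Lambda>"
    unfolding Rel_def
  proof (intro Inter_greatest subsetI)
    fix R p assume "R \<in> {R. equiv S1 R \<and> closed R \<and> \<Lambda> \<subseteq> R \<and>
      {(a, b). (a, b) \<in> offdiag \<and> countable {(c, d) \<in> \<Lambda>. linked a b c d}} \<subseteq> R}"
    then have R: "equiv S1 R" "{(a, b). (a, b) \<in> offdiag \<and> countable {(c, d) \<in> \<Lambda>. linked a b c d}} \<subseteq> R"
      by auto
    assume "p \<in> uncrossed_rel \<Lambda>"
    then obtain a b where p: "p = (a, b)" "a \<in> S1" "b \<in> S1" and "uncrossed \<Lambda> a b"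
      by (auto simp: uncrossed_rel_def)
    then have "{(c, d) \<in> \<Lambda>. linked a b c d} = {}"
      by (auto simp: uncrossed_def)
    then have "countable {(c, d) \<in> \<Lambda>. linked a b c d}"
      by (metis countable_empty)
    then have "a \<noteq> b \<Longrightarrow> (a, b) \<in> {(a, b). (a, b) \<in> offdiag \<and> countable {(c, d) \<in> \<Lambda>. linked a b c d}}"
      using p by (simp add: offdiag_def)
    then show "p \<in> R"
      using R p by (cases "a = b") (auto simp: equiv_def refl_on_def)
  qed
qed

section \<open>Uncrossed chords that are not leaves\<close>

lemma leaves_nested_args:
  assumes "a \<in> S1" "(u, v) \<in> \<Lambda>" "(u', v') \<in> \<Lambda>"
    and "Arg2pi (u' / a) < Arg2pi (u / a)" "Arg2pi (u / a) < Arg2pi (v' / a)" "Arg2pi (u / a) < Arg2pi (v / a)"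
  shows "Arg2pi (v / a) \<le> Arg2pi (v' / a)"
proof (rule ccontr)
  assume "\<not> ?thesis"
  then have "interleaved (Arg2pi (u' / a)) (Arg2pi (v' / a)) (Arg2pi (u / a)) (Arg2pi (v / a))"
    using assms(4-6) unfolding interleaved_def strictly_between_def by auto
  then have "linked u' v' u v"
    using linked_iff_interleaved_from[OF assms(1)] leafD assms(2,3) by blast
  then show False
    using leaves_unlinked assms(2,3) by blast
qed

lemma leaf_spanning_arg:
  assumes ab: "(a, b) \<in> uncrossed_rel \<Lambda>" and t: "0 < t" "t < Arg2pi (b / a)"
    and not_rel: "(a, a * cis t) \<notin> uncrossed_rel \<Lambda>"
  obtains u v where "(u, v) \<in> \<Lambda>" "0 < Arg2pi (u / a)" "Arg2pi (u / a) < t"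
    "t < Arg2pi (v / a)" "Arg2pi (v / a) \<le> Arg2pi (b / a)"
proof -
  have "a \<in> S1"
    using ab by (simp add: uncrossed_rel_def)
  have t_arg: "Arg2pi (a * cis t / a) = t"
    using t Arg2pi_lt_2pi[of "b / a"] Arg2pi_mult_cis_divide[OF \<open>a \<in> S1\<close>] by simp
  obtain x y where xy: "(x, y) \<in> \<Lambda>" "linked a (a * cis t) x y"
    using not_rel \<open>a \<in> S1\<close> mult_cis_in_S1 by (auto simp: uncrossed_rel_def uncrossed_def)
  have "\<not> linked a b x y"
    using ab xy(1) by (auto simp: uncrossed_rel_def uncrossed_def)
  then have "\<not> interleaved 0 (Arg2pi (b / a)) (Arg2pi (x / a)) (Arg2pi (y / a))"
    using linked_iff_interleaved_from[OF \<open>a \<in> S1\<close>, of a b x y] Arg2pi_divide_self[OF \<open>a \<in> S1\<close>]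
      ab leafD[OF xy(1)] by (simp add: uncrossed_rel_def)
  moreover have "interleaved 0 t (Arg2pi (x / a)) (Arg2pi (y / a))"
    using xy(2) linked_iff_interleaved_from[OF \<open>a \<in> S1\<close>] Arg2pi_divide_self[OF \<open>a \<in> S1\<close>] t_arg
    by metis
  ultimately have "(0 < Arg2pi (x / a) \<and> Arg2pi (x / a) < t \<and> t < Arg2pi (y / a) \<and> Arg2pi (y / a) \<le> Arg2pi (b / a)) \<or>
      (0 < Arg2pi (y / a) \<and> Arg2pi (y / a) < t \<and> t < Arg2pi (x / a) \<and> Arg2pi (x / a) \<le> Arg2pi (b / a))"
    using t Arg2pi_ge_0[of "x / a"] Arg2pi_ge_0[of "y / a"]
    unfolding interleaved_def strictly_between_def by (smt (verit))
  then show thesis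
    using that xy(1) leaf_sym by blast
qed

lemma leftmost_spanning_chord:
  assumes a: "a \<in> S1" and t0: "0 < t0" "t0 < \<beta>" "\<beta> < 2*pi"
    and uv: "(u, v) \<in> \<Lambda>" "Arg2pi (u / a) < t0" "t0 < Arg2pi (v / a)" "Arg2pi (v / a) \<le> \<beta>"
  obtains s t where "0 \<le> s" "s \<le> t0" "t0 \<le> t" "t \<le> \<beta>" "s \<noteq> t \<Longrightarrow> (a * cis s, a * cis t) \<in> \<Lambda>"
    "\<And>u v. (u, v) \<in> \<Lambda> \<Longrightarrow> Arg2pi (u / a) < s \<Longrightarrow> t0 \<le> Arg2pi (v / a) \<Longrightarrow> Arg2pi (v / a) \<le> \<beta> \<Longrightarrow> False"
proof -
  obtain C where "closed C" and C: "\<Lambda> = offdiag \<inter> C"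
    using leaves_closed_offdiag .
  define P where "P = ({0..t0} \<times> {t0..\<beta>}) \<inter> (\<lambda>p. (a * cis (fst p), a * cis (snd p))) -` C"
  have "compact P"
    unfolding P_def using \<open>closed C\<close>
    by (intro compact_Int_closed compact_Times compact_Icc continuous_closed_vimage continuous_intros)
  have leaf_in_P: "(Arg2pi (u / a), Arg2pi (v / a)) \<in> P"
    if "(u, v) \<in> \<Lambda>" "Arg2pi (u / a) \<le> t0" "t0 \<le> Arg2pi (v / a)" "Arg2pi (v / a) \<le> \<beta>" for u v
  proof -
    have "(a * cis (Arg2pi (u / a)), a * cis (Arg2pi (v / a))) \<in> C"
      using that(1) C mult_cis_Arg2pi_divide[OF a] leafD[OF that(1)] by auto
    then show ?thesis
      using that Arg2pi_ge_0[of "u / a"] by (simp add: P_def)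
  qed
  then have "P \<noteq> {}"
    using uv by fastforce
  then obtain m where "m \<in> P" and m_least: "\<And>p. p \<in> P \<Longrightarrow> fst m \<le> fst p"
    using continuous_attains_inf[OF \<open>compact P\<close> _ continuous_on_fst[OF continuous_on_id]] by blast
  obtain s t where "(s, t) \<in> P" and least: "\<And>p. p \<in> P \<Longrightarrow> s \<le> fst p"
    using \<open>m \<in> P\<close> m_least by (cases m) auto
  then have st: "0 \<le> s" "s \<le> t0" "t0 \<le> t" "t \<le> \<beta>" "(a * cis s, a * cis t) \<in> C"
    by (auto simp: P_def)
  have "(a * cis s, a * cis t) \<in> \<Lambda>" if "s \<noteq> t"
  proof -
    have "a * cis s \<noteq> a * cis t"
      using that st t0 Arg2pi_mult_cis_divide[OF a, of s] Arg2pi_mult_cis_divide[OF a, of t] by force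
    then show ?thesis
      using st(5) C mult_cis_in_S1[OF a] by (simp add: offdiag_def)
  qed
  moreover have False if "(u, v) \<in> \<Lambda>" "Arg2pi (u / a) < s" "t0 \<le> Arg2pi (v / a)" "Arg2pi (v / a) \<le> \<beta>" for u v
    using least[OF leaf_in_P[OF that(1)]] that st by simp
  ultimately show thesis
    using that st by blast
qed

text \<open>If no point of the open arc from \<open>a\<close> to \<open>b\<close> were related to \<open>a\<close>,
  every point of it would be spanned by a leaf. Take the chord spanning the middle of the arc whose
  first endpoint is closest to \<open>a\<close>: if that endpoint is \<open>a\<close>, the chord is a leaf from \<open>a\<close> into the arc;
  otherwise a leaf spanning that endpoint contains the chord and starts even closer to \<open>a\<close>.\<close>
lemma uncrossed_rel_point_on_arc:
  assumes ab: "(a, b) \<in> uncrossed_rel \<Lambda>" "a \<noteq> b" "(a, b) \<notin> \<Lambda>"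
  obtains c where "(a, c) \<in> uncrossed_rel \<Lambda>" "0 < Arg2pi (c / a)" "Arg2pi (c / a) < Arg2pi (b / a)"
proof (rule ccontr)
  note found = that
  assume "\<not> thesis"
  define \<beta> where "\<beta> = Arg2pi (b / a)"
  have a: "a \<in> S1" and "b \<in> S1"
    using ab by (auto simp: uncrossed_rel_def)
  have \<beta>: "0 < \<beta>" "\<beta> < 2*pi"
    using Arg2pi_divide_pos[OF a \<open>b \<in> S1\<close> ab(2)] Arg2pi_lt_2pi by (auto simp: \<beta>_def)
  have not_rel: "(a, a * cis t) \<notin> uncrossed_rel \<Lambda>" if "0 < t" "t < \<beta>" for t
    using found[of "a * cis t"] \<open>\<not> thesis\<close> that Arg2pi_mult_cis_divide[OF a, of t] \<beta> unfolding \<beta>_def by auto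
  have spanning: "\<exists>u v. (u, v) \<in> \<Lambda> \<and> Arg2pi (u / a) < t \<and> t < Arg2pi (v / a) \<and> Arg2pi (v / a) \<le> \<beta>"
    if "0 < t" "t < \<beta>" for t
    using leaf_spanning_arg[OF ab(1) that(1) _ not_rel[OF that]] that(2) unfolding \<beta>_def by metis
  define t0 where "t0 = \<beta> / 2"
  have "0 < t0" "t0 < \<beta>"
    using \<beta> by (auto simp: t0_def)
  then obtain s t where st: "0 \<le> s" "s \<le> t0" "t0 \<le> t" "t \<le> \<beta>"
    and leaf_st: "s \<noteq> t \<Longrightarrow> (a * cis s, a * cis t) \<in> \<Lambda>"
    and least: "\<And>u v. (u, v) \<in> \<Lambda> \<Longrightarrow> Arg2pi (u / a) < s \<Longrightarrow> t0 \<le> Arg2pi (v / a) \<Longrightarrow> Arg2pi (v / a) \<le> \<beta> \<Longrightarrow> False"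
    using spanning[of t0] leftmost_spanning_chord[OF a _ _ \<beta>(2)] by (metis less_imp_le)
  show False
  proof (cases "s = 0")
    case True
    then have leaf: "(a, a * cis t) \<in> \<Lambda>"
      using leaf_st st \<open>0 < t0\<close> by simp
    have "t \<noteq> \<beta>"
      using leaf mult_cis_Arg2pi_divide[OF a \<open>b \<in> S1\<close>] ab(3) by (auto simp: \<beta>_def)
    then show False
      using not_rel[of t] leaf_in_uncrossed_rel[OF leaf] st \<open>0 < t0\<close> by auto
  next
    case False
    then obtain u' v' where uv': "(u', v') \<in> \<Lambda>" "Arg2pi (u' / a) < s" "s < Arg2pi (v' / a)" "Arg2pi (v' / a) \<le> \<beta>"
      using spanning[of s] st \<open>t0 < \<beta>\<close> by auto
    have "t0 \<le> Arg2pi (v' / a)"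
    proof (cases "s = t")
      case False
      then have "t \<le> Arg2pi (v' / a)"
        using leaves_nested_args[OF a leaf_st[OF False] uv'(1)] uv'(2,3) st \<beta>
          Arg2pi_mult_cis_divide[OF a, of s] Arg2pi_mult_cis_divide[OF a, of t] by simp
      then show ?thesis
        using st by simp
    qed (use st uv' in simp)
    then show False
      using least[OF uv'(1,2)] uv'(4) by blast
  qed
qed

lemma uncrossed_non_leaf_separates:
  assumes ab: "(a, b) \<in> uncrossed_rel \<Lambda>" "a \<noteq> b" "(a, b) \<notin> \<Lambda>"
  obtains c c' where "(a, c) \<in> uncrossed_rel \<Lambda>" "(b, c') \<in> uncrossed_rel \<Lambda>" "linked a b c c'"
proof -
  have S1: "a \<in> S1" "b \<in> S1"
    using ab by (auto simp: uncrossed_rel_def)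
  obtain c where c: "(a, c) \<in> uncrossed_rel \<Lambda>" "0 < Arg2pi (c / a)" "Arg2pi (c / a) < Arg2pi (b / a)"
    using uncrossed_rel_point_on_arc[OF ab] .
  have "(b, a) \<in> uncrossed_rel \<Lambda>" "(b, a) \<notin> \<Lambda>"
    using ab uncrossed_sym leaf_sym by (auto simp: uncrossed_rel_def)
  then obtain c' where c': "(b, c') \<in> uncrossed_rel \<Lambda>" "0 < Arg2pi (c' / b)" "Arg2pi (c' / b) < Arg2pi (a / b)"
    using uncrossed_rel_point_on_arc ab(2) by metis
  have "c \<in> S1" "c' \<in> S1"
    using c c' by (auto simp: uncrossed_rel_def)
  have "0 < Arg2pi (b / a)"
    using c by linarith
  have "c' / b = (c' / a) / (b / a)" "a / b = (a / a) / (b / a)"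
    using S1 S1_nonzero by (auto simp: field_simps)
  then have "Arg2pi (c' / b) = (if Arg2pi (b / a) \<le> Arg2pi (c' / a) then Arg2pi (c' / a) - Arg2pi (b / a)
      else Arg2pi (c' / a) - Arg2pi (b / a) + 2*pi)"
    "Arg2pi (a / b) = 2*pi - Arg2pi (b / a)"
    using Arg2pi_divide_cases[of "b / a" "c' / a"] Arg2pi_divide_cases[of "b / a" "a / a"]
      Arg2pi_divide_self[of a] S1 S1_nonzero \<open>c' \<in> S1\<close> \<open>0 < Arg2pi (b / a)\<close> by auto
  then have "interleaved 0 (Arg2pi (b / a)) (Arg2pi (c / a)) (Arg2pi (c' / a))"
    using c c' Arg2pi_lt_2pi[of "c' / a"] unfolding interleaved_def strictly_between_def
    by (auto split: if_splits)
  then have "linked a b c c'"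
    using linked_iff_interleaved_from[OF S1(1)] Arg2pi_divide_self[OF S1(1)] S1 \<open>c \<in> S1\<close> \<open>c' \<in> S1\<close>
    by auto
  then show thesis
    using that c(1) c'(1) by blast
qed

theorem Lam_uncrossed_rel: "Lam (uncrossed_rel \<Lambda>) = \<Lambda>"
proof safe
  fix p q assume "(p, q) \<in> Lam (uncrossed_rel \<Lambda>)"
  then have pq: "p \<noteq> q" "(p, q) \<in> uncrossed_rel \<Lambda>"
    and unlinked: "\<And>z1 z2. (p, z1) \<in> uncrossed_rel \<Lambda> \<Longrightarrow> (p, z2) \<in> uncrossed_rel \<Lambda> \<Longrightarrow> \<not> linked p q z1 z2"
    using mem_Lam_iff[OF equiv_uncrossed_rel] by auto
  show "(p, q) \<in> \<Lambda>"
  proof (rule ccontr)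
    assume "(p, q) \<notin> \<Lambda>"
    then obtain c c' where "(p, c) \<in> uncrossed_rel \<Lambda>" "(q, c') \<in> uncrossed_rel \<Lambda>" "linked p q c c'"
      using uncrossed_non_leaf_separates pq by blast
    moreover have "(p, c') \<in> uncrossed_rel \<Lambda>"
      using pq(2) \<open>(q, c') \<in> uncrossed_rel \<Lambda>\<close> uncrossed_rel_trans by blast
    ultimately show False
      using unlinked by blast
  qed
next
  fix a b assume leaf: "(a, b) \<in> \<Lambda>"
  have "\<not> linked a b z1 z2" if "(a, z1) \<in> uncrossed_rel \<Lambda>" "(a, z2) \<in> uncrossed_rel \<Lambda>" for z1 z2
  proof -
    have "(z1, z2) \<in> uncrossed_rel \<Lambda>"
      using that equiv_uncrossed_rel by (meson equiv_def symD transD)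
    then show ?thesis
      using leaf linked_commute by (auto simp: uncrossed_rel_def uncrossed_def)
  qed
  then show "(a, b) \<in> Lam (uncrossed_rel \<Lambda>)"
    using mem_Lam_iff[OF equiv_uncrossed_rel] leafD[OF leaf] leaf_in_uncrossed_rel[OF leaf] by auto
qed

theorem laminar_relation_uncrossed_rel: "laminar_relation (uncrossed_rel \<Lambda>)"
  unfolding laminar_relation_def
proof (intro conjI ballI allI impI)
  show "equiv S1 (uncrossed_rel \<Lambda>)"
    by (rule equiv_uncrossed_rel)
  have closed: "closed (uncrossed_rel \<Lambda>)"
    using leafD by (intro closed_uncrossed_rel) auto
  then show "closedin (top_of_set offdiag) (uncrossed_rel \<Lambda> \<inter> offdiag)"
    by (simp add: closedin_closed_Int Int_commute)
  fix x
  have "uncrossed_rel \<Lambda> `` {x} = (\<lambda>y. (x, y)) -` uncrossed_rel \<Lambda>"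
    by auto
  moreover have "closed ((\<lambda>y. (x, y)) -` uncrossed_rel \<Lambda>)"
    by (rule continuous_closed_vimage[OF closed]) (intro continuous_intros)
  ultimately show "closed (uncrossed_rel \<Lambda> `` {x})"
    by simp
next
  fix x y a b c d
  assume xy: "(x, y) \<notin> uncrossed_rel \<Lambda>"
    and ab: "a \<in> uncrossed_rel \<Lambda> `` {x}" "b \<in> uncrossed_rel \<Lambda> `` {x}"
    and cd: "c \<in> uncrossed_rel \<Lambda> `` {y}" "d \<in> uncrossed_rel \<Lambda> `` {y}"
  show "\<not> linked a b c d"
  proof
    assume "linked a b c d"
    moreover have "(a, b) \<in> uncrossed_rel \<Lambda>" "(c, d) \<in> uncrossed_rel \<Lambda>"
      using equiv_same_class[OF equiv_uncrossed_rel] ab cd by blast+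
    ultimately have "(a, c) \<in> uncrossed_rel \<Lambda>"
      using uncrossed_diagonal linked_in_S1 by (simp add: uncrossed_rel_def)
    then have "(x, y) \<in> uncrossed_rel \<Lambda>"
      using ab(1) cd(1) equiv_class_eq_iff[OF equiv_uncrossed_rel] by (metis Image_singleton_iff)
    then show False
      using xy by blast
  qed
qed

end

theorem proposition2p5:
  shows "(\<forall>\<Lambda>. boundary_lamination \<Lambda> \<longrightarrow> at_most_two_leaves \<Lambda>) \<and>
         (\<forall>\<Lambda>. lamination \<Lambda> \<and> at_most_two_leaves \<Lambda> \<and> (\<forall>l \<in> \<Lambda>. \<not> isolated_leaf \<Lambda> l) \<longrightarrow>
              Lam (Rel \<Lambda>) = \<Lambda> \<and> boundary_lamination \<Lambda>)"
proof -
  have "at_most_two_leaves \<Lambda>" if "boundary_lamination \<Lambda>" for \<Lambda>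
    using that at_most_two_leaves_Lam by (auto simp: boundary_lamination_def laminar_relation_def)
  moreover have "Lam (Rel \<Lambda>) = \<Lambda> \<and> boundary_lamination \<Lambda>"
    if "lamination \<Lambda>" "at_most_two_leaves \<Lambda>" "\<forall>l \<in> \<Lambda>. \<not> isolated_leaf \<Lambda> l" for \<Lambda>
  proof -
    interpret perfect_lamination \<Lambda>
      using that by unfold_locales (auto simp: at_most_two_leaves_def isolated_leaf_def)
    show ?thesis
      using Rel_eq_uncrossed_rel Lam_uncrossed_rel laminar_relation_uncrossed_rel
      by (auto simp: boundary_lamination_def)
  qed
  ultimately show ?thesis
    by blast
qed

end
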